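(* For each $c_1\in\mathbb{R}$ there exists $c_2>0$ such that for all $W\in\mathcal{C}_0$, $\mathcal{L}(W)\le c_1$ implies $\|W_{\rm sh}-W\|_{L^2}\le c_2$.
   Context: Let $\Phi:\mathbb{R}\to\mathbb{R}$ be twice continuously differentiable on $[-1,1]$ with: $\Phi'(-1)=-1$, $\Phi'(1)=1$; $\Phi''\ge0$ on $[-1,1]$; $\Phi(-1)=\Phi(1)$; $\Phi''(-1)<1$, $\Phi''(1)<1$; and $g_\Phi(w):=\int_{-1}^w(v-\Phi'(v))\,dv>0$ for all $w\in(-1,1)$. $(\mathcal{A}U)(\varphi)=\int_{\varphi-1/2}^{\varphi+1/2}U(s)\,ds$; $W_{\rm sh}(\varphi)=\mathrm{sgn}(\varphi)$; $\mathcal{H}=\{W\text{ measurable}: W_{\rm sh}-W\in L^2(\mathbb{R})\}$; $\mathcal{L}(W)=\int_{\mathbb{R}}(\tfrac12W^2-\Phi(\mathcal{A}W))-(\tfrac12W_{\rm sh}^2-\Phi(\mathcal{A}W_{\rm sh}))\,d\varphi$. $\mathcal{C}$ is the set of $W\in\mathcal{H}$ that are a.e. equal to a nondecreasing function with $W(\varphi)\to\pm1$ as $\varphi\to\pm\infty$; $\mathcal{C}_0$ is the set of $W\in\mathcal{C}$ with $0\le W\le1$ a.e. on $[0,\infty)$ and $-1\le W\le0$ a.e. on $(-\infty,0]$. *)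

theory Defs
  imports "HOL-Analysis.Analysis"
begin

definition avgA :: "(real \<Rightarrow> real) \<Rightarrow> real \<Rightarrow> real" where
  "avgA U \<phi> = (LINT s:{\<phi> - 1/2 .. \<phi> + 1/2}|lborel. U s)"

definition Wsh :: "real \<Rightarrow> real" where
  "Wsh \<phi> = sgn \<phi>"

definition HH :: "(real \<Rightarrow> real) set" where
  "HH = {W. W \<in> borel_measurable lborel \<and>
             integrable lborel (\<lambda>\<phi>. (Wsh \<phi> - W \<phi>)\<^sup>2)}"

definition dist_sh :: "(real \<Rightarrow> real) \<Rightarrow> real" where
  "dist_sh W = sqrt (LINT \<phi>|lborel. (Wsh \<phi> - W \<phi>)\<^sup>2)"

definition energyL :: "(real \<Rightarrow> real) \<Rightarrow> (real \<Rightarrow> real) \<Rightarrow> real" where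
  "energyL \<Phi> W = (LINT \<phi>|lborel.
      (1/2 * (W \<phi>)\<^sup>2 - \<Phi> (avgA W \<phi>)) - (1/2 * (Wsh \<phi>)\<^sup>2 - \<Phi> (avgA Wsh \<phi>)))"

definition CC :: "(real \<Rightarrow> real) set" where
  "CC = {W \<in> HH. \<exists>f::real \<Rightarrow> real. mono f \<and> (AE \<phi> in lborel. W \<phi> = f \<phi>) \<and>
            (f \<longlongrightarrow> 1) at_top \<and> (f \<longlongrightarrow> -1) at_bot}"

definition CC0 :: "(real \<Rightarrow> real) set" where
  "CC0 = {W \<in> CC. (AE \<phi> in lborel. \<phi> \<ge> 0 \<longrightarrow> 0 \<le> W \<phi> \<and> W \<phi> \<le> 1) \<and>
                   (AE \<phi> in lborel. \<phi> \<le> 0 \<longrightarrow> -1 \<le> W \<phi> \<and> W \<phi> \<le> 0)}"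

end

theory Submission
  imports Defs
begin

text \<open>
  With \<open>g\<^sub>\<Phi>(w) = \<integral>\<^sub>-\<^sub>1\<^sup>w (v - \<Phi>'(v)) dv\<close>, the integrand of \<open>L(W)\<close> splits as
  \<open>g\<^sub>\<Phi>(W) + (\<Phi>(W) - \<Phi>(A W)) + (\<Phi>(A W\<^sub>s\<^sub>h) - \<Phi>(W\<^sub>s\<^sub>h))\<close>.
  Since \<open>\<Phi>''(\<plusminus>1) < 1\<close>, \<open>g\<close> grows quadratically away from its zeros \<open>\<plusminus>1\<close>, and it is positive in
  between, so \<open>g\<^sub>\<Phi>(w) \<ge> c (1 - w\<^sup>2)\<^sup>2 \<ge> c (W\<^sub>s\<^sub>h - w)\<^sup>2\<close> whenever \<open>w\<close> has the sign of \<open>W\<^sub>s\<^sub>h\<close>.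
  Convexity and \<open>\<Phi>'(\<plusminus>1) = \<plusminus>1\<close> make \<open>\<Phi>\<close> 1-Lipschitz on \<open>[-1,1]\<close>. For monotone \<open>W\<close> the error
  \<open>|W - A W|\<close> is at most the increment \<open>W(\<phi>+1/2) - W(\<phi>-1/2)\<close>, whose integral telescopes to at
  most 2, and \<open>A W\<^sub>s\<^sub>h = W\<^sub>s\<^sub>h\<close> off \<open>[-1/2,1/2]\<close>. Hence \<open>L(W) \<ge> c \<parallel>W\<^sub>s\<^sub>h - W\<parallel>\<^sup>2 - 4\<close>.
\<close>

section \<open>Integration on the real line\<close>

lemma borel_measurable_comp_continuous_on:
  assumes "continuous_on S h" "g \<in> borel_measurable M" "\<And>x. x \<in> space M \<Longrightarrow> g x \<in> S"
  shows "(\<lambda>x. h (g x)) \<in> borel_measurable M"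
proof -
  have "g \<in> measurable M (restrict_space borel S)"
    using assms(2,3) by (intro measurable_restrict_space2) auto
  from measurable_compose[OF this borel_measurable_continuous_on_restrict[OF assms(1)]]
  show ?thesis .
qed

lemma integrable_indicator_Icc_mult:
  fixes f :: "real \<Rightarrow> real"
  assumes [measurable]: "f \<in> borel_measurable lborel" and bound: "\<And>x. x \<in> {a..b} \<Longrightarrow> \<bar>f x\<bar> \<le> B"
  shows "integrable lborel (\<lambda>x. indicator {a..b} x * f x)"
proof (rule Bochner_Integration.integrable_bound)
  show "integrable lborel (\<lambda>x. B * indicator {a..b} x :: real)"
    by (intro integrable_mult_right integrable_real_indicator) (auto simp: emeasure_lborel_Icc_eq)
  show "AE x in lborel. norm (indicator {a..b} x * f x) \<le> norm (B * indicator {a..b} x :: real)"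
    using bound by (auto simp: indicator_def intro: order_trans[OF _ abs_ge_self])
qed measurable

lemma integral_indicator_Icc_shift:
  fixes f :: "real \<Rightarrow> real"
  shows "(\<integral>x. indicator {a..b} x * f (x + h) \<partial>lborel) = (\<integral>x. indicator {a+h..b+h} x * f x \<partial>lborel)"
  using lborel_integral_real_affine[of 1 "\<lambda>x. indicator {a+h..b+h} x * f x" h]
  by (simp add: indicator_def add.commute)

lemma integral_increment_Icc_le:
  fixes f :: "real \<Rightarrow> real"
  assumes [measurable]: "f \<in> borel_measurable lborel"
    and bound: "\<And>x. \<bar>f x\<bar> \<le> 1" and "0 \<le> h"
  shows "(\<integral>x. indicator {-r..r} x * (f (x + h) - f (x - h)) \<partial>lborel) \<le> 4 * h"
proof -
  let ?A = "{-r+h..r+h}" and ?B = "{-r-h..r-h}" and ?C = "{r-h..r+h}" and ?C' = "{-r-h..-r+h}"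
  have int: "integrable lborel (\<lambda>x. indicator {c..d} x * f (x + e))" for c d e
    using bound by (intro integrable_indicator_Icc_mult[where B = 1]) auto
  have "(\<integral>x. indicator {-r..r} x * (f (x + h) - f (x - h)) \<partial>lborel)
      = (\<integral>x. indicator {-r..r} x * f (x + h) - indicator {-r..r} x * f (x + - h) \<partial>lborel)"
    by (simp add: right_diff_distrib)
  also have "\<dots> = (\<integral>x. indicator {-r..r} x * f (x + h) \<partial>lborel) - (\<integral>x. indicator {-r..r} x * f (x + - h) \<partial>lborel)"
    by (intro Bochner_Integration.integral_diff int)
  also have "\<dots> = (\<integral>x. indicator ?A x * f x - indicator ?B x * f x \<partial>lborel)"
    unfolding integral_indicator_Icc_shift
    using int[of _ _ 0] by (subst Bochner_Integration.integral_diff) auto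
  also have "\<dots> \<le> (\<integral>x. indicator ?C x + indicator ?C' x \<partial>lborel)"
  proof (rule integral_mono)
    fix x
    have "-1 \<le> f x" "f x \<le> 1" using bound[of x] by auto
    then show "indicator ?A x * f x - indicator ?B x * f x \<le> (indicator ?C x + indicator ?C' x :: real)"
      using \<open>0 \<le> h\<close> by (auto simp: indicator_def)
  qed (use int[of _ _ 0] in \<open>auto intro!: Bochner_Integration.integrable_add integrable_real_indicator simp: emeasure_lborel_Icc_eq\<close>)
  also have "\<dots> = 4 * h"
    using \<open>0 \<le> h\<close> by (subst Bochner_Integration.integral_add) (auto simp: measure_def)
  finally show ?thesis .
qed

lemma integrable_nonneg_bounded_truncations:
  fixes D :: "real \<Rightarrow> real"
  assumes [measurable]: "D \<in> borel_measurable lborel" and nonneg: "\<And>x. 0 \<le> D x"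
    and trunc_int: "\<And>r. integrable lborel (\<lambda>x. indicator {-r..r} x * D x)"
    and trunc_le: "\<And>r. (\<integral>x. indicator {-r..r} x * D x \<partial>lborel) \<le> B"
  shows "integrable lborel D" "integral\<^sup>L lborel D \<le> B"
proof -
  define F where "F n x = ennreal (indicator {-real n..real n} x * D x)" for n :: nat and x
  have "incseq F"
    by (intro incseq_SucI le_funI) (auto simp: F_def indicator_def nonneg)
  moreover have "F n \<in> borel_measurable lborel" for n
    unfolding F_def by measurable
  moreover have "(\<lambda>n. F n x) \<longlonglongrightarrow> ennreal (D x)" for x
  proof (rule tendsto_eventually, rule eventually_sequentiallyI)
    fix n assume "nat \<lceil>\<bar>x\<bar>\<rceil> \<le> n"
    then show "F n x = ennreal (D x)" by (simp add: F_def indicator_def abs_le_iff)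
  qed
  ultimately have lim: "(\<lambda>n. integral\<^sup>N lborel (F n)) \<longlonglongrightarrow> (\<integral>\<^sup>+ x. ennreal (D x) \<partial>lborel)"
    by (rule nn_integral_LIMSEQ)
  have "integral\<^sup>N lborel (F n) \<le> ennreal B" for n
    unfolding F_def using trunc_le
    by (subst nn_integral_eq_integral[OF trunc_int]) (auto intro!: ennreal_leI simp: nonneg)
  with lim have nn_le: "(\<integral>\<^sup>+ x. ennreal (D x) \<partial>lborel) \<le> ennreal B"
    by (intro LIMSEQ_le_const2) auto
  then show int: "integrable lborel D"
    by (intro integrableI_nonneg) (auto simp: nonneg le_less_trans)
  have "0 \<le> B"
    using order_trans[OF Bochner_Integration.integral_nonneg trunc_le[of 0]] nonneg by simp
  with nn_le show "integral\<^sup>L lborel D \<le> B"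
    by (simp add: nn_integral_eq_integral[OF int] nonneg)
qed

lemma
  fixes f :: "real \<Rightarrow> real"
  assumes "mono f" and bound: "\<And>x. \<bar>f x\<bar> \<le> 1" and "0 \<le> h"
  shows integrable_mono_increment: "integrable lborel (\<lambda>x. f (x + h) - f (x - h))"
    and integral_mono_increment_le: "(\<integral>x. f (x + h) - f (x - h) \<partial>lborel) \<le> 4 * h"
proof -
  have [measurable]: "f \<in> borel_measurable lborel"
    using \<open>mono f\<close> by (simp add: borel_measurable_mono)
  have nonneg: "0 \<le> f (x + h) - f (x - h)" for x
    using \<open>mono f\<close> \<open>0 \<le> h\<close> by (simp add: monoD)
  have "\<bar>f (x + h) - f (x - h)\<bar> \<le> 2" for x
    using bound[of "x + h"] bound[of "x - h"] by linarith
  then have "integrable lborel (\<lambda>x. indicator {-r..r} x * (f (x + h) - f (x - h)))" for r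
    by (intro integrable_indicator_Icc_mult[where B = 2]) auto
  from integrable_nonneg_bounded_truncations[OF _ nonneg this integral_increment_Icc_le[OF _ bound \<open>0 \<le> h\<close>]]
  show "integrable lborel (\<lambda>x. f (x + h) - f (x - h))"
    and "(\<integral>x. f (x + h) - f (x - h) \<partial>lborel) \<le> 4 * h"
    by simp_all
qed

lemma integral_ge_of_dominated_bounds:
  fixes I q e :: "'a \<Rightarrow> real"
  assumes "integrable M q" "integrable M e" "I \<in> borel_measurable M"
    and lower: "AE x in M. c * q x - e x \<le> I x"
    and upper: "AE x in M. \<bar>I x\<bar> \<le> K * q x + e x"
  shows "c * integral\<^sup>L M q - integral\<^sup>L M e \<le> integral\<^sup>L M I"
proof -
  have "integrable M I"
  proof (rule Bochner_Integration.integrable_bound)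
    show "integrable M (\<lambda>x. K * q x + e x)"
      using assms(1,2) by simp
    show "AE x in M. norm (I x) \<le> norm (K * q x + e x)"
      using upper by eventually_elim auto
  qed (rule assms(3))
  then have "(\<integral>x. c * q x - e x \<partial>M) \<le> integral\<^sup>L M I"
    using lower assms(1,2) by (intro integral_mono_AE) simp_all
  with assms(1,2) show ?thesis by simp
qed

lemma AE_lborel_ex_in_interval:
  fixes a b :: real
  assumes "AE x in lborel. P x" "a < b"
  shows "\<exists>x\<in>{a<..<b}. P x"
proof (rule ccontr)
  assume "\<not> ?thesis"
  then have "AE x in lborel. x \<notin> {a<..<b}"
    using assms(1) by (auto elim: eventually_mono)
  moreover have "{a<..<b} \<in> sets lborel" by simp
  ultimately have "{a<..<b} \<in> null_sets lborel"
    by (metis AE_iff_null_sets)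
  with assms(2) emeasure_lborel_Ioo[of a b] show False by (simp add: null_sets_def)
qed

section \<open>Calculus on intervals\<close>

lemma deriv_nonneg_imp_le:
  fixes f f' :: "real \<Rightarrow> real"
  assumes "x \<le> y" "{x..y} \<subseteq> S"
    and deriv: "\<And>t. t \<in> S \<Longrightarrow> (f has_real_derivative f' t) (at t within S)"
    and nonneg: "\<And>t. x < t \<Longrightarrow> t < y \<Longrightarrow> 0 \<le> f' t"
  shows "f x \<le> f y"
proof -
  have deriv_Icc: "(f has_real_derivative f' t) (at t within {x..y})" if "t \<in> {x..y}" for t
    using DERIV_subset[OF deriv] that assms(2) by blast
  show ?thesis
  proof (rule DERIV_nonneg_imp_increasing_open[OF \<open>x \<le> y\<close>])
    fix t assume "x < t" "t < y"
    with deriv_Icc[of t] have "(f has_real_derivative f' t) (at t)"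
      by (simp add: at_within_Icc_at)
    with nonneg \<open>x < t\<close> \<open>t < y\<close> show "\<exists>d. (f has_real_derivative d) (at t) \<and> 0 \<le> d" by blast
  qed (use DERIV_continuous_on deriv_Icc in blast)
qed

lemma quadratic_growth_at_critical_point:
  fixes g g' g'' :: "real \<Rightarrow> real"
  assumes d1: "\<And>x. x \<in> {a..b} \<Longrightarrow> (g has_real_derivative g' x) (at x within {a..b})"
    and d2: "\<And>x. x \<in> {a..b} \<Longrightarrow> (g' has_real_derivative g'' x) (at x within {a..b})"
    and convex: "\<And>x. x \<in> {a..b} \<Longrightarrow> 2 * e \<le> g'' x"
    and crit: "x0 \<in> {a..b}" "g' x0 = 0" and w: "w \<in> {a..b}"
  shows "g x0 + e * (w - x0)\<^sup>2 \<le> g w"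
proof -
  define h where "h x = g x - e * (x - x0)\<^sup>2" for x
  define h' where "h' x = g' x - 2 * e * (x - x0)" for x
  have dh: "(h has_real_derivative h' x) (at x within {a..b})" if "x \<in> {a..b}" for x
    unfolding h_def h'_def using d1[OF that] by (auto intro!: derivative_eq_intros)
  have dh': "(h' has_real_derivative g'' x - 2 * e) (at x within {a..b})" if "x \<in> {a..b}" for x
    unfolding h'_def using d2[OF that] by (auto intro!: derivative_eq_intros)
  have h'_x0: "h' x0 = 0" by (simp add: h'_def crit)
  show ?thesis
  proof (cases "x0 \<le> w")
    case True
    have "h' x0 \<le> h' t" if "x0 < t" "t < w" for t
      by (rule deriv_nonneg_imp_le[OF _ _ dh']) (use that crit w convex in auto)
    then have "h x0 \<le> h w"
      by (intro deriv_nonneg_imp_le[OF True _ dh]) (use crit w h'_x0 in auto)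
    then show ?thesis by (simp add: h_def)
  next
    case False
    have h'_nonpos: "h' t \<le> h' x0" if "w < t" "t < x0" for t
      by (rule deriv_nonneg_imp_le[OF _ _ dh']) (use that crit w convex in auto)
    have d_neg: "((\<lambda>x. - h x) has_real_derivative - h' x) (at x within {a..b})" if "x \<in> {a..b}" for x
      using dh[OF that] by (rule DERIV_minus)
    have "(\<lambda>x. - h x) w \<le> (\<lambda>x. - h x) x0"
      by (rule deriv_nonneg_imp_le[OF _ _ d_neg]) (use False crit w h'_x0 h'_nonpos in auto)
    then show ?thesis by (simp add: h_def)
  qed
qed

lemma positive_lower_bound_vanishing_quadratically_at_ends:
  fixes g :: "real \<Rightarrow> real"
  assumes "a < b" and cont: "continuous_on {a..b} g" and pos: "\<And>x. x \<in> {a<..<b} \<Longrightarrow> 0 < g x"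
    and "0 < \<delta>" "0 < e"
    and left: "\<And>x. x \<in> {a..a+\<delta>} \<Longrightarrow> e * (x - a)\<^sup>2 \<le> g x"
    and right: "\<And>x. x \<in> {b-\<delta>..b} \<Longrightarrow> e * (b - x)\<^sup>2 \<le> g x"
  obtains c where "0 < c" "\<And>x. x \<in> {a..b} \<Longrightarrow> c * ((x - a) * (b - x))\<^sup>2 \<le> g x"
proof -
  define d where "d = min \<delta> ((b - a) / 2)"
  have d: "0 < d" "d \<le> \<delta>" "a + d \<le> b - d" using assms by (auto simp: d_def min_def field_simps)
  obtain x0 where x0: "x0 \<in> {a+d..b-d}" "\<And>y. y \<in> {a+d..b-d} \<Longrightarrow> g x0 \<le> g y"
    using continuous_attains_inf[of "{a+d..b-d}" g] continuous_on_subset[OF cont] d by force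
  define m where "m = g x0"
  have "0 < m" unfolding m_def using x0(1) d by (intro pos) auto
  define L where "L = (b - a)\<^sup>2"
  have "0 < L" using \<open>a < b\<close> by (simp add: L_def)
  define c where "c = min (e / L) (m / L\<^sup>2)"
  have "0 < c" using \<open>0 < e\<close> \<open>0 < m\<close> \<open>0 < L\<close> by (simp add: c_def)
  moreover have "c * ((x - a) * (b - x))\<^sup>2 \<le> g x" if x: "x \<in> {a..b}" for x
  proof -
    have sq_le: "(x - a)\<^sup>2 \<le> L" "(b - x)\<^sup>2 \<le> L"
      using x unfolding L_def by (auto intro!: power_mono)
    have prod: "c * ((x - a) * (b - x))\<^sup>2 = c * (x - a)\<^sup>2 * (b - x)\<^sup>2"
      by (simp add: power_mult_distrib)
    consider "x \<le> a + d" | "b - d \<le> x" | "x \<in> {a+d..b-d}" by force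
    then show ?thesis
    proof cases
      case 1
      have "c * (x - a)\<^sup>2 * (b - x)\<^sup>2 \<le> (e / L) * (x - a)\<^sup>2 * L"
        using \<open>0 < c\<close> \<open>0 < e\<close> \<open>0 < L\<close> sq_le by (intro mult_mono) (auto simp: c_def)
      also have "\<dots> \<le> g x"
        using left[of x] x 1 d \<open>0 < L\<close> by simp
      finally show ?thesis by (simp add: prod)
    next
      case 2
      have "c * (x - a)\<^sup>2 * (b - x)\<^sup>2 \<le> (e / L) * L * (b - x)\<^sup>2"
        using \<open>0 < c\<close> \<open>0 < e\<close> \<open>0 < L\<close> sq_le by (intro mult_mono) (auto simp: c_def)
      also have "\<dots> \<le> g x"
        using right[of x] x 2 d \<open>0 < L\<close> by simp
      finally show ?thesis by (simp add: prod)
    next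
      case 3
      have "c * (x - a)\<^sup>2 * (b - x)\<^sup>2 \<le> (m / L\<^sup>2) * L * L"
        using \<open>0 < c\<close> \<open>0 < m\<close> \<open>0 < L\<close> sq_le by (intro mult_mono) (auto simp: c_def)
      also have "\<dots> = m"
        using \<open>0 < L\<close> by (simp add: power2_eq_square)
      also have "\<dots> \<le> g x"
        using x0(2)[OF 3] by (simp add: m_def)
      finally show ?thesis by (simp add: prod)
    qed
  qed
  ultimately show ?thesis by (rule that)
qed

section \<open>The averaging operator, the shock profile and \<open>CC0\<close>\<close>

lemma borel_measurable_avgA [measurable]:
  assumes [measurable]: "U \<in> borel_measurable lborel"
  shows "avgA U \<in> borel_measurable lborel"
  unfolding avgA_def set_lebesgue_integral_def
  by (rule lborel.borel_measurable_lebesgue_integral) (simp add: indicator_def split_beta')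

lemma avgA_mono_bounds:
  fixes f :: "real \<Rightarrow> real"
  assumes "mono f"
  shows "f (\<phi> - 1/2) \<le> avgA f \<phi>" "avgA f \<phi> \<le> f (\<phi> + 1/2)"
proof -
  let ?I = "{\<phi> - 1/2..\<phi> + 1/2}"
  have [measurable]: "f \<in> borel_measurable lborel"
    using assms by (simp add: borel_measurable_mono)
  have between: "f (\<phi> - 1/2) \<le> f s \<and> f s \<le> f (\<phi> + 1/2)" if "s \<in> ?I" for s
    using that assms by (auto intro: monoD)
  have f_int: "set_integrable lborel ?I f"
    unfolding set_integrable_def real_scaleR_def using between
    by (intro integrable_indicator_Icc_mult[where B = "\<bar>f (\<phi> - 1/2)\<bar> + \<bar>f (\<phi> + 1/2)\<bar>"]) force+
  have const_int: "set_integrable lborel ?I (\<lambda>_. c)" for c :: real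
    unfolding set_integrable_def real_scaleR_def by (intro integrable_indicator_Icc_mult[where B = "\<bar>c\<bar>"]) auto
  have const: "(LINT s:?I|lborel. c) = c" for c :: real
    using set_integral_const[of ?I lborel c] by (simp add: measure_def)
  show "f (\<phi> - 1/2) \<le> avgA f \<phi>"
    using set_integral_mono[OF const_int f_int, of "f (\<phi> - 1/2)"] between
    unfolding avgA_def const by blast
  show "avgA f \<phi> \<le> f (\<phi> + 1/2)"
    using set_integral_mono[OF f_int const_int, of "f (\<phi> + 1/2)"] between
    unfolding avgA_def const by blast
qed

lemma abs_avgA_le:
  assumes "mono f" "\<And>x. \<bar>f x\<bar> \<le> 1"
  shows "\<bar>avgA f \<phi>\<bar> \<le> 1"
  using avgA_mono_bounds[OF assms(1), of \<phi>] assms(2)[of "\<phi> - 1/2"] assms(2)[of "\<phi> + 1/2"]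
  by (simp add: abs_le_iff)

lemma avgA_cong_AE:
  assumes "U \<in> borel_measurable lborel" "V \<in> borel_measurable lborel" "AE x in lborel. U x = V x"
  shows "avgA U = avgA V"
  unfolding avgA_def by (intro ext set_lebesgue_integral_cong_AE) (use assms in auto)

lemma mono_Wsh: "mono Wsh"
  by (rule monoI) (auto simp: Wsh_def sgn_real_def)

lemma abs_Wsh_le: "\<bar>Wsh x\<bar> \<le> 1"
  by (simp add: Wsh_def sgn_real_def)

lemma avgA_Wsh_eq:
  assumes "1/2 < \<bar>\<phi>\<bar>"
  shows "avgA Wsh \<phi> = Wsh \<phi>"
proof -
  have "Wsh (\<phi> - 1/2) = Wsh \<phi>" "Wsh (\<phi> + 1/2) = Wsh \<phi>"
    using assms by (auto simp: Wsh_def sgn_real_def)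
  with avgA_mono_bounds[OF mono_Wsh, of \<phi>] show ?thesis by linarith
qed

lemma
  fixes f :: "real \<Rightarrow> real"
  assumes "mono f" "\<And>x. \<bar>f x\<bar> \<le> 1"
  shows integrable_increment_error:
      "integrable lborel (\<lambda>\<phi>. f (\<phi> + 1/2) - f (\<phi> - 1/2) + 2 * indicator {-1/2..1/2} \<phi>)"
    and integral_increment_error_le:
      "(\<integral>\<phi>. f (\<phi> + 1/2) - f (\<phi> - 1/2) + 2 * indicator {-1/2..1/2} \<phi> \<partial>lborel) \<le> 4"
proof -
  have "integrable lborel (\<lambda>\<phi>. 2 * indicator {-1/2..1/2::real} \<phi> :: real)"
    by (intro integrable_mult_right integrable_real_indicator) auto
  with integrable_mono_increment[OF assms] integral_mono_increment_le[OF assms, of "1/2"]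
  show "integrable lborel (\<lambda>\<phi>. f (\<phi> + 1/2) - f (\<phi> - 1/2) + 2 * indicator {-1/2..1/2} \<phi>)"
    and "(\<integral>\<phi>. f (\<phi> + 1/2) - f (\<phi> - 1/2) + 2 * indicator {-1/2..1/2} \<phi> \<partial>lborel) \<le> 4"
    by (simp_all add: measure_def)
qed

lemma mono_abs_le_one_of_limits:
  fixes f :: "real \<Rightarrow> real"
  assumes "mono f" "(f \<longlongrightarrow> 1) at_top" "(f \<longlongrightarrow> -1) at_bot"
  shows "\<bar>f x\<bar> \<le> 1"
proof -
  have "eventually (\<lambda>y. f x \<le> f y) at_top"
    using eventually_ge_at_top[of x] by eventually_elim (rule monoD[OF \<open>mono f\<close>])
  moreover have "eventually (\<lambda>y. f y \<le> f x) at_bot"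
    using eventually_le_at_bot[of x] by eventually_elim (rule monoD[OF \<open>mono f\<close>])
  ultimately
  show ?thesis using tendsto_lowerbound[OF assms(2)] tendsto_upperbound[OF assms(3)]
    by (simp add: abs_le_iff)
qed

lemma CC0_monotone_representative:
  assumes "W \<in> CC0"
  obtains f where "mono f" "\<And>x. \<bar>f x\<bar> \<le> 1" "AE x in lborel. W x = f x" "\<And>x. 0 \<le> Wsh x * f x"
proof -
  obtain f where f: "mono f" "AE x in lborel. W x = f x" "(f \<longlongrightarrow> 1) at_top" "(f \<longlongrightarrow> -1) at_bot"
    using assms by (auto simp: CC0_def CC_def)
  have "AE x in lborel. 0 \<le> x \<longrightarrow> 0 \<le> W x" "AE x in lborel. x \<le> 0 \<longrightarrow> W x \<le> 0"
    using assms by (auto simp: CC0_def elim: eventually_mono)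
  with f(2) have "AE x in lborel. 0 \<le> x \<longrightarrow> 0 \<le> f x" "AE x in lborel. x \<le> 0 \<longrightarrow> f x \<le> 0"
    by (auto elim: eventually_elim2)
  have "0 \<le> f x" if x: "0 < x" for x
  proof -
    obtain y where "y \<in> {0<..<x}" "0 \<le> y \<longrightarrow> 0 \<le> f y"
      using AE_lborel_ex_in_interval[OF \<open>AE x in lborel. 0 \<le> x \<longrightarrow> 0 \<le> f x\<close> x] by blast
    with monoD[OF f(1), of y x] show ?thesis by auto
  qed
  moreover have "f x \<le> 0" if x: "x < 0" for x
  proof -
    obtain y where "y \<in> {x<..<0}" "y \<le> 0 \<longrightarrow> f y \<le> 0"
      using AE_lborel_ex_in_interval[OF \<open>AE x in lborel. x \<le> 0 \<longrightarrow> f x \<le> 0\<close> x] by blast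
    with monoD[OF f(1), of x y] show ?thesis by auto
  qed
  ultimately have "0 \<le> Wsh x * f x" for x
    by (cases x "0::real" rule: linorder_cases) (auto simp: Wsh_def mult_nonpos_nonpos)
  with f mono_abs_le_one_of_limits[OF f(1,3,4)] that show ?thesis by blast
qed

definition energy_density :: "(real \<Rightarrow> real) \<Rightarrow> (real \<Rightarrow> real) \<Rightarrow> real \<Rightarrow> real" where
  "energy_density \<Phi> W \<phi> = (1/2 * (W \<phi>)\<^sup>2 - \<Phi> (avgA W \<phi>)) - (1/2 * (Wsh \<phi>)\<^sup>2 - \<Phi> (avgA Wsh \<phi>))"

lemma energyL_eq_integral_energy_density: "energyL \<Phi> W = (\<integral>\<phi>. energy_density \<Phi> W \<phi> \<partial>lborel)"
  unfolding energyL_def energy_density_def ..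

section \<open>The energy bound\<close>

locale shock_potential =
  fixes \<Phi> \<Phi>' \<Phi>'' :: "real \<Rightarrow> real"
  assumes deriv1: "\<And>x. x \<in> {-1..1} \<Longrightarrow> (\<Phi> has_real_derivative \<Phi>' x) (at x within {-1..1})"
    and deriv2: "\<And>x. x \<in> {-1..1} \<Longrightarrow> (\<Phi>' has_real_derivative \<Phi>'' x) (at x within {-1..1})"
    and continuous_deriv2: "continuous_on {-1..1} \<Phi>''"
    and deriv1_left: "\<Phi>' (-1) = -1"
    and deriv1_right: "\<Phi>' 1 = 1"
    and deriv2_nonneg: "\<And>x. x \<in> {-1..1} \<Longrightarrow> \<Phi>'' x \<ge> 0"
    and equal_ends: "\<Phi> (-1) = \<Phi> 1"
    and deriv2_left: "\<Phi>'' (-1) < 1"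
    and deriv2_right: "\<Phi>'' 1 < 1"
    and well_positive: "\<And>w. w \<in> {-1<..<1} \<Longrightarrow> integral {-1..w} (\<lambda>v. v - \<Phi>' v) > 0"
begin

lemma abs_deriv1_le:
  assumes "x \<in> {-1..1}"
  shows "\<bar>\<Phi>' x\<bar> \<le> 1"
proof -
  have "\<Phi>' (-1) \<le> \<Phi>' x" "\<Phi>' x \<le> \<Phi>' 1"
    using assms deriv2_nonneg by (auto intro!: deriv_nonneg_imp_le[OF _ _ deriv2])
  with deriv1_left deriv1_right show ?thesis by auto
qed

lemma Phi_lipschitz:
  assumes "x \<in> {-1..1}" "y \<in> {-1..1}"
  shows "\<bar>\<Phi> x - \<Phi> y\<bar> \<le> \<bar>x - y\<bar>"
  using field_differentiable_bound[of "{-1..1}" \<Phi> \<Phi>' 1 x y] deriv1 abs_deriv1_le assms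
  by (auto simp: convex_real_interval)

lemma borel_measurable_Phi_comp:
  assumes "g \<in> borel_measurable M" "\<And>x. \<bar>g x\<bar> \<le> 1"
  shows "(\<lambda>x. \<Phi> (g x)) \<in> borel_measurable M"
  by (rule borel_measurable_comp_continuous_on[OF DERIV_continuous_on[OF deriv1] assms(1)])
    (use assms(2) in \<open>auto simp: abs_le_iff\<close>)

definition G :: "real \<Rightarrow> real" where
  "G w = w\<^sup>2 / 2 - \<Phi> w - (1/2 - \<Phi> 1)"

lemma G_deriv: "x \<in> {-1..1} \<Longrightarrow> (G has_real_derivative x - \<Phi>' x) (at x within {-1..1})"
  unfolding G_def by (auto intro!: derivative_eq_intros deriv1)

lemma G_deriv2: "x \<in> {-1..1} \<Longrightarrow> ((\<lambda>x. x - \<Phi>' x) has_real_derivative 1 - \<Phi>'' x) (at x within {-1..1})"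
  by (auto intro!: derivative_eq_intros deriv2)

lemma integral_eq_G:
  assumes "w \<in> {-1..1}"
  shows "integral {-1..w} (\<lambda>v. v - \<Phi>' v) = G w"
proof -
  have "((\<lambda>v. v - \<Phi>' v) has_integral G w - G (-1)) {-1..w}"
    using assms
    by (intro fundamental_theorem_of_calculus)
       (auto simp: has_real_derivative_iff_has_vector_derivative[symmetric] intro!: DERIV_subset[OF G_deriv])
  moreover have "G (-1) = 0"
    using equal_ends by (simp add: G_def)
  ultimately show ?thesis by (simp add: integral_unique)
qed

lemma G_pos: "w \<in> {-1<..<1} \<Longrightarrow> 0 < G w"
  using well_positive integral_eq_G by fastforce

lemma G_le:
  assumes "\<bar>s\<bar> = 1" "w \<in> {-1..1}"
  shows "G w \<le> (s - w)\<^sup>2 / 2"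
proof -
  have s: "s = 1 \<or> s = -1"
    using assms(1) by arith
  then have "\<Phi> s = \<Phi> 1" "\<bar>s - w\<bar> = 1 - s * w" "s\<^sup>2 = 1"
    using assms(2) equal_ends by auto
  moreover have "\<Phi> s - \<Phi> w \<le> \<bar>s - w\<bar>"
    using Phi_lipschitz[of s w] s assms(2) by (auto simp: abs_le_iff)
  ultimately show ?thesis
    by (simp add: G_def power2_diff)
qed

lemma deriv2_bounded_below_one_near_ends:
  obtains \<delta> e where "0 < \<delta>" "\<delta> \<le> 1" "0 < e"
    "\<And>x. x \<in> {-1..-1+\<delta>} \<union> {1-\<delta>..1} \<Longrightarrow> 2 * e \<le> 1 - \<Phi>'' x"
proof -
  define e where "e = min (1 - \<Phi>'' (-1)) (1 - \<Phi>'' 1) / 4"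
  have "0 < e" using deriv2_left deriv2_right by (simp add: e_def)
  have "uniformly_continuous_on {-1..1} \<Phi>''"
    using continuous_deriv2 by (simp add: compact_uniformly_continuous)
  moreover have "0 < 2 * e" using \<open>0 < e\<close> by simp
  ultimately obtain d where d: "0 < d"
    "\<And>x y. x \<in> {-1..1} \<Longrightarrow> y \<in> {-1..1} \<Longrightarrow> dist y x < d \<Longrightarrow> dist (\<Phi>'' y) (\<Phi>'' x) < 2 * e"
    unfolding uniformly_continuous_on_def by blast
  define \<delta> where "\<delta> = min (d / 2) 1"
  have "0 < \<delta>" "\<delta> \<le> 1" using d by (auto simp: \<delta>_def)
  moreover have "2 * e \<le> 1 - \<Phi>'' x" if "x \<in> {-1..-1+\<delta>} \<union> {1-\<delta>..1}" for x
  proof -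
    have "\<delta> < d" using d by (simp add: \<delta>_def)
    then have "\<Phi>'' x < \<Phi>'' (-1) + 2 * e \<or> \<Phi>'' x < \<Phi>'' 1 + 2 * e"
      using that d(2)[of "-1" x] d(2)[of 1 x] \<open>\<delta> \<le> 1\<close> by (auto simp: dist_real_def abs_less_iff)
    moreover have "4 * e \<le> 1 - \<Phi>'' (-1)" "4 * e \<le> 1 - \<Phi>'' 1"
      by (simp_all add: e_def)
    ultimately show ?thesis
      by linarith
  qed
  ultimately show ?thesis using that \<open>0 < e\<close> by blast
qed

lemma G_lower_bound:
  obtains c where "0 < c" "\<And>w. w \<in> {-1..1} \<Longrightarrow> c * (1 - w\<^sup>2)\<^sup>2 \<le> G w"
proof -
  obtain \<delta> e where \<delta>: "0 < \<delta>" "\<delta> \<le> 1" "0 < e"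
    and convex: "\<And>x. x \<in> {-1..-1+\<delta>} \<union> {1-\<delta>..1} \<Longrightarrow> 2 * e \<le> 1 - \<Phi>'' x"
    using deriv2_bounded_below_one_near_ends by blast
  have growth: "G x0 + e * (w - x0)\<^sup>2 \<le> G w"
    if sub: "{a..b} \<subseteq> {-1..-1+\<delta>} \<union> {1-\<delta>..1}" and "x0 \<in> {a..b}" "\<Phi>' x0 = x0" "w \<in> {a..b}"
    for a b x0 w
  proof (rule quadratic_growth_at_critical_point)
    fix x assume x: "x \<in> {a..b}"
    have "{a..b} \<subseteq> {-1..1}" using sub \<delta> by auto
    with x show "(G has_real_derivative x - \<Phi>' x) (at x within {a..b})"
      and "((\<lambda>x. x - \<Phi>' x) has_real_derivative 1 - \<Phi>'' x) (at x within {a..b})"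
      by (auto intro!: DERIV_subset[OF G_deriv] DERIV_subset[OF G_deriv2])
    show "2 * e \<le> 1 - \<Phi>'' x" using convex x sub by auto
  qed (use that in auto)
  have "G (-1) = 0" "G 1 = 0"
    using equal_ends by (simp_all add: G_def)
  then have "e * (w - -1)\<^sup>2 \<le> G w" if "w \<in> {-1..-1+\<delta>}" for w
    using growth[of "-1" "-1+\<delta>" "-1" w] that \<delta> deriv1_left by auto
  moreover have "e * (1 - w)\<^sup>2 \<le> G w" if "w \<in> {1-\<delta>..1}" for w
    using growth[of "1-\<delta>" 1 1 w] that \<delta> deriv1_right \<open>G 1 = 0\<close> by (auto simp: power2_commute)
  moreover have "continuous_on {-1..1} G"
    using G_deriv by (rule DERIV_continuous_on)
  ultimately obtain c where "0 < c" "\<And>w. w \<in> {-1..1} \<Longrightarrow> c * ((w - -1) * (1 - w))\<^sup>2 \<le> G w"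
    using positive_lower_bound_vanishing_quadratically_at_ends[of "-1" 1 G \<delta> e] G_pos \<delta> by auto
  moreover have "(w - -1) * (1 - w) = 1 - w\<^sup>2" for w :: real
    by (simp add: algebra_simps power2_eq_square)
  ultimately show ?thesis using that by auto
qed

lemma shock_average_error: "\<bar>\<Phi> (avgA Wsh \<phi>) - \<Phi> (Wsh \<phi>)\<bar> \<le> 2 * indicator {-1/2..1/2} \<phi>"
proof (cases "1/2 < \<bar>\<phi>\<bar>")
  case True
  then show ?thesis by (simp add: avgA_Wsh_eq)
next
  case False
  have "\<bar>\<Phi> (avgA Wsh \<phi>) - \<Phi> (Wsh \<phi>)\<bar> \<le> \<bar>avgA Wsh \<phi> - Wsh \<phi>\<bar>"
    using abs_avgA_le[OF mono_Wsh abs_Wsh_le] abs_Wsh_le by (intro Phi_lipschitz) (auto simp: abs_le_iff)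
  also have "\<dots> \<le> 2"
    using abs_avgA_le[OF mono_Wsh abs_Wsh_le, of \<phi>] abs_Wsh_le[of \<phi>] by linarith
  finally have "\<bar>\<Phi> (avgA Wsh \<phi>) - \<Phi> (Wsh \<phi>)\<bar> \<le> 2" .
  moreover have "indicator {-1/2..1/2} \<phi> = (1::real)"
    using False by (auto simp: indicator_def abs_if split: if_splits)
  ultimately show ?thesis by simp
qed

lemma energy_density_bounds:
  assumes c: "0 \<le> c" "\<And>w. w \<in> {-1..1} \<Longrightarrow> c * (1 - w\<^sup>2)\<^sup>2 \<le> G w"
    and s: "\<bar>s\<bar> = 1" and w: "w \<in> {-1..1}" "0 \<le> s * w"
    and u: "u \<in> {-1..1}" and a: "a \<in> {-1..1}"
  shows "c * (s - w)\<^sup>2 - (\<bar>w - u\<bar> + \<bar>\<Phi> a - \<Phi> s\<bar>) \<le> (1/2 * w\<^sup>2 - \<Phi> u) - (1/2 * s\<^sup>2 - \<Phi> a)"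
    and "\<bar>(1/2 * w\<^sup>2 - \<Phi> u) - (1/2 * s\<^sup>2 - \<Phi> a)\<bar> \<le> 1/2 * (s - w)\<^sup>2 + (\<bar>w - u\<bar> + \<bar>\<Phi> a - \<Phi> s\<bar>)"
proof -
  have "s = 1 \<or> s = -1"
    using s by arith
  then have s2: "s\<^sup>2 = 1" and "\<Phi> s = \<Phi> 1"
    using equal_ends by auto
  then have density: "(1/2 * w\<^sup>2 - \<Phi> u) - (1/2 * s\<^sup>2 - \<Phi> a) = G w + (\<Phi> w - \<Phi> u) + (\<Phi> a - \<Phi> s)"
    by (simp add: G_def)
  have "\<bar>\<Phi> w - \<Phi> u\<bar> \<le> \<bar>w - u\<bar>"
    using Phi_lipschitz w u by simp
  have "1 \<le> (s + w)\<^sup>2"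
    using s2 w(2) by (simp add: power2_sum)
  then have "(s - w)\<^sup>2 * 1 \<le> (s - w)\<^sup>2 * (s + w)\<^sup>2"
    by (intro mult_left_mono) auto
  also have "\<dots> = (1 - w\<^sup>2)\<^sup>2"
    using s2 by (simp add: power_mult_distrib[symmetric] algebra_simps power2_eq_square)
  finally have "c * (s - w)\<^sup>2 \<le> c * (1 - w\<^sup>2)\<^sup>2"
    using c(1) by (simp add: mult_left_mono)
  also have "\<dots> \<le> G w"
    using c(2) w(1) .
  finally have "c * (s - w)\<^sup>2 \<le> G w" .
  moreover have "G w \<le> 1/2 * (s - w)\<^sup>2"
    using G_le[OF s w(1)] by simp
  moreover have "0 \<le> c * (s - w)\<^sup>2"
    using c by simp
  ultimately show "c * (s - w)\<^sup>2 - (\<bar>w - u\<bar> + \<bar>\<Phi> a - \<Phi> s\<bar>) \<le> (1/2 * w\<^sup>2 - \<Phi> u) - (1/2 * s\<^sup>2 - \<Phi> a)"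
    and "\<bar>(1/2 * w\<^sup>2 - \<Phi> u) - (1/2 * s\<^sup>2 - \<Phi> a)\<bar> \<le> 1/2 * (s - w)\<^sup>2 + (\<bar>w - u\<bar> + \<bar>\<Phi> a - \<Phi> s\<bar>)"
    unfolding density using \<open>\<bar>\<Phi> w - \<Phi> u\<bar> \<le> \<bar>w - u\<bar>\<close> by (auto simp: abs_le_iff)
qed

lemma borel_measurable_energy_density:
  assumes [measurable]: "W \<in> borel_measurable lborel" and "\<And>\<phi>. \<bar>avgA W \<phi>\<bar> \<le> 1"
  shows "energy_density \<Phi> W \<in> borel_measurable lborel"
proof -
  have [measurable]: "Wsh \<in> borel_measurable lborel"
    using mono_Wsh by (simp add: borel_measurable_mono)
  have [measurable]: "(\<lambda>\<phi>. \<Phi> (avgA W \<phi>)) \<in> borel_measurable lborel"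
    using assms by (intro borel_measurable_Phi_comp) auto
  have [measurable]: "(\<lambda>\<phi>. \<Phi> (avgA Wsh \<phi>)) \<in> borel_measurable lborel"
    using abs_avgA_le[OF mono_Wsh abs_Wsh_le] by (intro borel_measurable_Phi_comp) auto
  show ?thesis unfolding energy_density_def by measurable
qed

lemma energy_density_AE_bounds:
  assumes c: "0 \<le> c" "\<And>w. w \<in> {-1..1} \<Longrightarrow> c * (1 - w\<^sup>2)\<^sup>2 \<le> G w"
    and f: "mono f" "\<And>x. \<bar>f x\<bar> \<le> 1" "\<And>x. 0 \<le> Wsh x * f x"
    and W: "W \<in> borel_measurable lborel" "AE x in lborel. W x = f x"
  defines "e \<phi> \<equiv> f (\<phi> + 1/2) - f (\<phi> - 1/2) + 2 * indicator {-1/2..1/2} \<phi>"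
  shows "AE \<phi> in lborel. c * (Wsh \<phi> - W \<phi>)\<^sup>2 - e \<phi> \<le> energy_density \<Phi> W \<phi> \<and>
                         \<bar>energy_density \<Phi> W \<phi>\<bar> \<le> 1/2 * (Wsh \<phi> - W \<phi>)\<^sup>2 + e \<phi>"
proof -
  have "avgA W = avgA f"
    using W f(1) by (intro avgA_cong_AE) (auto simp: borel_measurable_mono)
  \<comment> \<open>\<open>Wsh 0 = 0\<close> is not \<open>\<plusminus>1\<close>, so the point \<open>0\<close> has to be discarded.\<close>
  have "AE \<phi> in lborel. \<phi> \<noteq> 0 \<and> W \<phi> = f \<phi>"
    using AE_lborel_singleton[of 0] W(2) by eventually_elim auto
  then show ?thesis
  proof eventually_elim
    case (elim \<phi>)
    have "f (\<phi> - 1/2) \<le> f \<phi>" "f \<phi> \<le> f (\<phi> + 1/2)"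
      using f(1) by (auto intro: monoD)
    then have deviation: "\<bar>f \<phi> - avgA f \<phi>\<bar> \<le> f (\<phi> + 1/2) - f (\<phi> - 1/2)"
      using avgA_mono_bounds[OF f(1), of \<phi>] by (simp add: abs_le_iff)
    have "\<bar>Wsh \<phi>\<bar> = 1"
      using elim by (simp add: Wsh_def)
    from energy_density_bounds[OF c this _ f(3) _ _, of "avgA f \<phi>" "avgA Wsh \<phi>"]
    show ?case
      using elim f(2)[of \<phi>] abs_avgA_le[OF f(1,2), of \<phi>] abs_avgA_le[OF mono_Wsh abs_Wsh_le, of \<phi>]
        deviation shock_average_error[of \<phi>] \<open>avgA W = avgA f\<close>
      by (auto simp: energy_density_def e_def abs_le_iff)
  qed
qed

lemma energyL_lower_bound:
  obtains c where "0 < c" "\<And>W. W \<in> CC0 \<Longrightarrow> c * (\<integral>\<phi>. (Wsh \<phi> - W \<phi>)\<^sup>2 \<partial>lborel) - 4 \<le> energyL \<Phi> W"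
proof -
  obtain c where c: "0 < c" "\<And>w. w \<in> {-1..1} \<Longrightarrow> c * (1 - w\<^sup>2)\<^sup>2 \<le> G w"
    using G_lower_bound by blast
  have "c * (\<integral>\<phi>. (Wsh \<phi> - W \<phi>)\<^sup>2 \<partial>lborel) - 4 \<le> energyL \<Phi> W" if W: "W \<in> CC0" for W
  proof -
    obtain f where f: "mono f" "\<And>x. \<bar>f x\<bar> \<le> 1" "AE x in lborel. W x = f x" "\<And>x. 0 \<le> Wsh x * f x"
      using CC0_monotone_representative[OF W] by blast
    have [measurable]: "W \<in> borel_measurable lborel" "f \<in> borel_measurable lborel"
      and square_int: "integrable lborel (\<lambda>\<phi>. (Wsh \<phi> - W \<phi>)\<^sup>2)"
      using W f(1) by (auto simp: CC0_def CC_def HH_def borel_measurable_mono)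
    define e where "e = (\<lambda>\<phi>. f (\<phi> + 1/2) - f (\<phi> - 1/2) + 2 * indicator {-1/2..1/2} \<phi>)"
    have "integrable lborel e" "integral\<^sup>L lborel e \<le> 4"
      using integrable_increment_error[OF f(1,2)] integral_increment_error_le[OF f(1,2)] by (simp_all add: e_def)
    moreover have "energy_density \<Phi> W \<in> borel_measurable lborel"
      using avgA_cong_AE[of W f] f abs_avgA_le[OF f(1,2)] by (intro borel_measurable_energy_density) auto
    ultimately have "c * (\<integral>\<phi>. (Wsh \<phi> - W \<phi>)\<^sup>2 \<partial>lborel) - integral\<^sup>L lborel e \<le> energyL \<Phi> W"
      unfolding energyL_eq_integral_energy_density
      using energy_density_AE_bounds[OF less_imp_le[OF c(1)] c(2) f(1,2,4) _ f(3)] square_int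
      by (intro integral_ge_of_dominated_bounds[where K = "1/2"]) (simp_all add: e_def)
    with \<open>integral\<^sup>L lborel e \<le> 4\<close> show ?thesis by linarith
  qed
  with c(1) that show ?thesis by blast
qed

end

theorem corollary3p13:
  fixes \<Phi> \<Phi>' \<Phi>'' :: "real \<Rightarrow> real"
  assumes d1: "\<And>x. x \<in> {-1..1} \<Longrightarrow> (\<Phi> has_real_derivative \<Phi>' x) (at x within {-1..1})"
      and d2: "\<And>x. x \<in> {-1..1} \<Longrightarrow> (\<Phi>' has_real_derivative \<Phi>'' x) (at x within {-1..1})"
      and d2c: "continuous_on {-1..1} \<Phi>''"
      and dm1: "\<Phi>' (-1) = -1"
      and dp1: "\<Phi>' 1 = 1"
      and conv: "\<And>x. x \<in> {-1..1} \<Longrightarrow> \<Phi>'' x \<ge> 0"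
      and sym: "\<Phi> (-1) = \<Phi> 1"
      and ddm1: "\<Phi>'' (-1) < 1"
      and ddp1: "\<Phi>'' 1 < 1"
      and gpos: "\<And>w. w \<in> {-1<..<1} \<Longrightarrow> integral {-1..w} (\<lambda>v. v - \<Phi>' v) > 0"
  shows "\<forall>c1::real. \<exists>c2>0. \<forall>W \<in> CC0. energyL \<Phi> W \<le> c1 \<longrightarrow> dist_sh W \<le> c2"
proof
  fix c1 :: real
  interpret shock_potential \<Phi> \<Phi>' \<Phi>''
    using assms by unfold_locales
  obtain c where "0 < c" and coercive: "\<And>W. W \<in> CC0 \<Longrightarrow> c * (LINT \<phi>|lborel. (Wsh \<phi> - W \<phi>)\<^sup>2) - 4 \<le> energyL \<Phi> W"
    using energyL_lower_bound by blast
  have "dist_sh W \<le> sqrt (max 1 ((c1 + 4) / c))" if "W \<in> CC0" "energyL \<Phi> W \<le> c1" for W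
  proof -
    have "(LINT \<phi>|lborel. (Wsh \<phi> - W \<phi>)\<^sup>2) \<le> (c1 + 4) / c"
      using coercive[OF that(1)] that(2) \<open>0 < c\<close> by (simp add: field_simps)
    then show ?thesis
      unfolding dist_sh_def by (intro real_sqrt_le_mono) linarith
  qed
  then show "\<exists>c2>0. \<forall>W \<in> CC0. energyL \<Phi> W \<le> c1 \<longrightarrow> dist_sh W \<le> c2"
    by (intro exI[of _ "sqrt (max 1 ((c1 + 4) / c))"]) auto
qed

end
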